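(* Let $A\in\mathbb{C}$, let $\sqrt{A}$ denote either square root of $A$, and let $|q|<1$. Define $F(A;q):=\sum_{n\geq0}\frac{q^{n^2}(A;q^2)_n}{(q^2;q^2)_n}$. Then $$F(A;q)=\frac12 (-q;q^2)_{\infty}\left[(-\sqrt{A};-q)_{\infty}+(\sqrt{A};-q)_{\infty}\right].$$
   Context: The $q$-Pochhammer symbol: $(a;q)_0=1$, $(a;q)_n=\prod_{j=0}^{n-1}(1-aq^j)$ for $n\ge1$, and $(a;q)_\infty=\prod_{j\ge0}(1-aq^j)$. *)

theory Defs
  imports "HOL-Analysis.Analysis"
begin

definition qpoch :: "complex \<Rightarrow> complex \<Rightarrow> nat \<Rightarrow> complex" where
  "qpoch a q n = (\<Prod>j<n. 1 - a * q ^ j)"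

definition qpoch_inf :: "complex \<Rightarrow> complex \<Rightarrow> complex" where
  "qpoch_inf a q = (\<Prod>j. 1 - a * q ^ j)"

definition F :: "complex \<Rightarrow> complex \<Rightarrow> complex" where
  "F A q = (\<Sum>n. q ^ (n^2) * qpoch A (q^2) n / qpoch (q^2) (q^2) n)"

end

theory Submission
  imports Defs
begin

(* Euler's theorem (x;p)_inf = sum_k e_k(p) x^k, with e_k(p) = (-1)^k p^(k(k-1)/2) / (p;p)_k
   (euler_coeff p k), and the q-binomial theorem
   (A;p)_n / (p;p)_n = sum_{k<=n} e_k(p) A^k / (p;p)_(n-k),
   together with q^(j^2) / (q^2;q^2)_j = e_j(q^2) (-q)^j, turn F(A;q) into an absolutely
   convergent double series whose (k, j) term is indexed by n = k + j.
   Summing over j first gives Euler's series at x = -q^(2k+1), that is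
   (-q;q^2)_inf / (-q;q^2)_k, and e_k(q^2) q^(k^2) / (-q;q^2)_k = e_(2k)(-q).
   What remains is (-q;q^2)_inf times sum_k e_(2k)(-q) s^(2k), the even part of Euler's
   series for (x;-q)_inf, which is the average of its values at x = s and x = -s. *)

lemma sums_even_part:
  fixes c :: "nat \<Rightarrow> 'a::real_normed_field"
  assumes "(\<lambda>k. c k * s ^ k) sums u" "(\<lambda>k. c k * (-s) ^ k) sums v"
  shows "(\<lambda>m. c (2 * m) * (s^2) ^ m) sums ((u + v) / 2)"
proof -
  define f where "f k = (c k * s ^ k + c k * (-s) ^ k) / 2" for k
  have "f sums ((u + v) / 2)"
    unfolding f_def using assms by (intro sums_divide sums_add)
  moreover have "f k = 0" if "k \<notin> range (\<lambda>m. 2 * m)" for k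
  proof -
    have "odd k"
      using that by (auto elim: evenE)
    then show ?thesis
      by (simp add: f_def)
  qed
  ultimately have "(\<lambda>m. f (2 * m)) sums ((u + v) / 2)"
    by (subst sums_mono_reindex) (auto intro: strict_monoI)
  moreover have "f (2 * m) = c (2 * m) * (s^2) ^ m" for m
    by (simp add: f_def power_mult)
  ultimately show ?thesis
    by simp
qed

lemma summable_on_bounded_by_product:
  fixes h :: "'a \<times> 'b \<Rightarrow> 'c::banach"
  assumes f: "(\<lambda>x. norm (f x)) summable_on A" and g: "(\<lambda>y. norm (g y)) summable_on B"
    and bound: "\<And>x y. x \<in> A \<Longrightarrow> y \<in> B \<Longrightarrow> norm (h (x, y)) \<le> norm (f x) * norm (g y)"
  shows "h summable_on A \<times> B"
proof -
  have "(\<lambda>(x, y). norm (f x) * norm (g y)) summable_on A \<times> B"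
    using f g by (intro summable_on_SigmaI[where g = "\<lambda>x. norm (f x) * infsum (\<lambda>y. norm (g y)) B"])
      (auto intro: summable_on_cmult_left has_sum_cmult_right)
  then have "(\<lambda>z. norm (h z)) summable_on A \<times> B"
    by (rule Infinite_Sum.abs_summable_on_comparison_test') (use bound in auto)
  then show ?thesis
    by (rule abs_summable_summable)
qed

lemma sums_antidiagonals:
  fixes h :: "nat \<times> nat \<Rightarrow> 'a::banach"
  assumes "h summable_on UNIV"
  shows "(\<lambda>n. \<Sum>k\<le>n. h (k, n - k)) sums infsum h UNIV"
proof -
  have "bij_betw (\<lambda>(n, k). (k, n - k)) (SIGMA n:UNIV. {..n::nat}) UNIV"
    by (rule bij_betwI[where g = "\<lambda>(k, j). (k + j, k)"]) auto
  then have "((\<lambda>x. h ((\<lambda>(n, k). (k, n - k)) x)) has_sum infsum h UNIV) (SIGMA n:UNIV. {..n})"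
    by (subst has_sum_reindex_bij_betw) (use assms in \<open>auto intro: has_sum_infsum\<close>)
  then have "((\<lambda>n. \<Sum>k\<le>n. h (k, n - k)) has_sum infsum h UNIV) UNIV"
    by (rule has_sum_SigmaD) (simp add: has_sum_finite)
  then show ?thesis
    by (rule has_sum_imp_sums)
qed

lemma norm_mult_power_le: "norm (p::complex) \<le> 1 \<Longrightarrow> norm (x * p ^ j) \<le> norm x"
  by (simp add: norm_mult norm_power mult_left_le power_le_one)

lemma one_minus_mult_power_nonzero:
  fixes x p :: complex
  assumes "norm x < 1" "norm p \<le> 1"
  shows "1 - x * p ^ j \<noteq> 0"
  using norm_mult_power_le[OF assms(2), of x j] assms(1) by auto

lemma qpoch_nonzero:
  assumes "norm x < 1" "norm p \<le> 1"
  shows "qpoch x p n \<noteq> 0"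
  using one_minus_mult_power_nonzero[OF assms] by (simp add: qpoch_def)

lemma one_minus_power_Suc_nonzero: "norm (p::complex) < 1 \<Longrightarrow> 1 - p ^ Suc k \<noteq> 0"
  using one_minus_mult_power_nonzero[of p p k] by simp

lemma norm_square_less_one: "norm (q::complex) < 1 \<Longrightarrow> norm (q^2) < 1"
  by (simp add: norm_power power_less_one_iff)

lemma qpoch_Suc: "qpoch x p (Suc n) = qpoch x p n * (1 - x * p ^ n)"
  by (simp add: qpoch_def)

lemma qpoch_Suc_shift: "qpoch x p (Suc n) = (1 - x) * qpoch (x * p) p n"
  unfolding qpoch_def by (subst prod.lessThan_Suc_shift) (simp add: mult_ac)

lemma qpoch_tendsto_qpoch_inf:
  assumes "norm p < 1"
  shows "(\<lambda>n. qpoch x p n) \<longlonglongrightarrow> qpoch_inf x p"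
proof -
  have "summable (\<lambda>j. norm (1 - x * p ^ j - 1))"
    using assms by (simp add: norm_mult norm_power summable_mult summable_geometric)
  then have "convergent_prod (\<lambda>j. 1 - x * p ^ j)"
    by (intro abs_convergent_prod_imp_convergent_prod summable_imp_abs_convergent_prod)
  then have "(\<lambda>n. qpoch x p (Suc n)) \<longlonglongrightarrow> qpoch_inf x p"
    unfolding qpoch_def qpoch_inf_def lessThan_Suc_atMost by (rule convergent_prod_LIMSEQ)
  then show ?thesis
    by (rule LIMSEQ_imp_Suc)
qed

fun euler_coeff :: "complex \<Rightarrow> nat \<Rightarrow> complex" where
  "euler_coeff p 0 = 1"
| "euler_coeff p (Suc k) = - euler_coeff p k * p ^ k / (1 - p ^ Suc k)"

definition euler_series :: "complex \<Rightarrow> complex \<Rightarrow> complex" where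
  "euler_series p x = (\<Sum>k. euler_coeff p k * x ^ k)"

lemma euler_coeff_Suc_mult:
  "norm p < 1 \<Longrightarrow> euler_coeff p (Suc k) * (1 - p ^ Suc k) = - euler_coeff p k * p ^ k"
  using one_minus_power_Suc_nonzero[of p k] by simp

lemma summable_norm_euler_coeff_power:
  assumes p: "norm p < 1"
  shows "summable (\<lambda>k. norm (euler_coeff p k * x ^ k))"
proof -
  define r where "r = norm p"
  have r: "0 \<le> r" "r < 1"
    using p by (auto simp: r_def)
  have "(\<lambda>n. r ^ n) \<longlonglongrightarrow> 0"
    using r by (intro LIMSEQ_power_zero) auto
  then have "(\<lambda>n. norm x * r ^ n / (1 - r)) \<longlonglongrightarrow> 0"
    by (intro tendsto_divide_zero tendsto_mult_right_zero)
  then have "eventually (\<lambda>n. norm x * r ^ n / (1 - r) < 1/2) sequentially"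
    by (rule order_tendstoD) simp
  then obtain N where N: "\<And>n. n \<ge> N \<Longrightarrow> norm x * r ^ n / (1 - r) < 1/2"
    by (auto simp: eventually_sequentially)
  show ?thesis
  proof (rule summable_ratio_test[of "1/2" N])
    fix n assume "n \<ge> N"
    have "1 - r \<le> norm (1 - p ^ Suc n)"
      using norm_triangle_ineq2[of 1 "p ^ Suc n"] norm_mult_power_le[of p p n] p
      by (simp add: r_def)
    then have "r ^ n * norm x / norm (1 - p ^ Suc n) \<le> norm x * r ^ n / (1 - r)"
      using r by (simp add: frac_le mult.commute)
    also have "\<dots> \<le> 1/2"
      using N[OF \<open>n \<ge> N\<close>] by simp
    finally have ratio: "r ^ n * norm x / norm (1 - p ^ Suc n) \<le> 1/2" .
    have "norm (euler_coeff p (Suc n) * x ^ Suc n)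
          = norm (euler_coeff p n * x ^ n) * (r ^ n * norm x / norm (1 - p ^ Suc n))"
      by (simp add: norm_mult norm_divide norm_power r_def field_simps)
    also have "\<dots> \<le> norm (euler_coeff p n * x ^ n) * (1/2)"
      using ratio by (intro mult_left_mono) auto
    finally show "norm (norm (euler_coeff p (Suc n) * x ^ Suc n))
                    \<le> 1/2 * norm (norm (euler_coeff p n * x ^ n))"
      by simp
  qed simp
qed

lemma summable_euler_coeff_power: "norm p < 1 \<Longrightarrow> summable (\<lambda>k. euler_coeff p k * x ^ k)"
  by (rule summable_norm_cancel[OF summable_norm_euler_coeff_power])

lemma summable_on_norm_euler_coeff_power:
  "norm p < 1 \<Longrightarrow> (\<lambda>k. norm (euler_coeff p k * x ^ k)) summable_on UNIV"
  by (rule norm_summable_imp_summable_on) (simp add: summable_norm_euler_coeff_power)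

lemma euler_series_functional_eq:
  assumes p: "norm p < 1"
  shows "euler_series p x = (1 - x) * euler_series p (p * x)"
proof -
  define d where "d k = euler_coeff p k * x ^ k - euler_coeff p k * (p * x) ^ k" for k
  have d_sums: "d sums (euler_series p x - euler_series p (p * x))"
    unfolding d_def euler_series_def
    by (intro sums_diff summable_sums summable_euler_coeff_power[OF p])
  have d_Suc: "d (Suc k) = - x * (euler_coeff p k * (p * x) ^ k)" for k
  proof -
    have "d (Suc k) = euler_coeff p (Suc k) * (1 - p ^ Suc k) * x ^ Suc k"
      unfolding d_def power_mult_distrib
      by (simp del: euler_coeff.simps add: algebra_simps)
    also have "\<dots> = - x * (euler_coeff p k * (p * x) ^ k)"
      by (simp only: euler_coeff_Suc_mult[OF p]) (simp add: power_mult_distrib mult_ac)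
    finally show ?thesis .
  qed
  have "(\<lambda>k. d (Suc k)) sums (- x * euler_series p (p * x))"
    unfolding euler_series_def d_Suc
    by (intro sums_mult summable_sums summable_euler_coeff_power[OF p])
  then have "d sums (- x * euler_series p (p * x))"
    by (rule sums_Suc_imp[rotated]) (simp add: d_def)
  with d_sums have "euler_series p x - euler_series p (p * x) = - x * euler_series p (p * x)"
    by (rule sums_unique2)
  then show ?thesis
    by (simp add: algebra_simps)
qed

lemma euler_series_eq_qpoch_mult:
  assumes "norm p < 1"
  shows "euler_series p x = qpoch x p n * euler_series p (p ^ n * x)"
proof (induction n)
  case 0
  then show ?case by (simp add: qpoch_def)
next
  case (Suc n)
  then show ?case
    using euler_series_functional_eq[OF assms, of "p ^ n * x"]
    by (simp add: qpoch_Suc mult_ac)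
qed

theorem euler_series_eq_qpoch_inf:
  assumes p: "norm p < 1"
  shows "euler_series p x = qpoch_inf x p"
proof -
  have "isCont (euler_series p) 0"
    unfolding euler_series_def[abs_def]
    by (rule isCont_powser_converges_everywhere) (rule summable_euler_coeff_power[OF p])
  moreover have "(\<lambda>n. p ^ n * x) \<longlonglongrightarrow> 0"
    using p by (auto intro!: tendsto_mult_left_zero LIMSEQ_power_zero)
  ultimately have "(\<lambda>n. euler_series p (p ^ n * x)) \<longlonglongrightarrow> euler_series p 0"
    by (rule isCont_tendsto_compose)
  then have "(\<lambda>n. qpoch x p n * euler_series p (p ^ n * x)) \<longlonglongrightarrow> qpoch_inf x p * 1"
    by (intro tendsto_mult qpoch_tendsto_qpoch_inf[OF p]) (simp add: euler_series_def)
  then show ?thesis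
    using euler_series_eq_qpoch_mult[OF p] LIMSEQ_const_iff by fastforce
qed

corollary euler_coeff_sums:
  "norm p < 1 \<Longrightarrow> (\<lambda>k. euler_coeff p k * x ^ k) sums qpoch_inf x p"
  using summable_euler_coeff_power euler_series_eq_qpoch_inf
  by (metis summable_sums euler_series_def)

corollary qpoch_inf_eq_qpoch_mult:
  "norm p < 1 \<Longrightarrow> qpoch_inf x p = qpoch x p n * qpoch_inf (p ^ n * x) p"
  using euler_series_eq_qpoch_mult euler_series_eq_qpoch_inf by metis

definition euler_convolution :: "complex \<Rightarrow> nat \<Rightarrow> complex \<Rightarrow> complex" where
  "euler_convolution p n A = (\<Sum>k\<le>n. euler_coeff p k * A ^ k / qpoch p p (n - k))"

lemma euler_convolution_index_shift:
  assumes p: "norm p < 1"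
  shows "(\<Sum>k\<le>Suc n. euler_coeff p k * (1 - p ^ k) * A ^ k / qpoch p p (Suc n - k))
       = - A * euler_convolution p n (A * p)"
proof -
  have "euler_coeff p (Suc k) * (1 - p ^ Suc k) * A ^ Suc k / qpoch p p (Suc n - Suc k)
        = - A * (euler_coeff p k * (A * p) ^ k / qpoch p p (n - k))" for k
    by (simp only: euler_coeff_Suc_mult[OF p] diff_Suc_Suc) (simp add: power_mult_distrib mult_ac)
  then show ?thesis
    unfolding euler_convolution_def by (simp only: sum.atMost_Suc_shift sum_distrib_left) simp
qed

lemma euler_convolution_qpoch_absorb:
  assumes p: "norm p < 1"
  shows "(\<Sum>k\<le>Suc n. euler_coeff p k * p ^ k * (1 - p ^ (Suc n - k)) * A ^ k / qpoch p p (Suc n - k))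
       = euler_convolution p n (A * p)"
proof -
  have "euler_coeff p k * p ^ k * (1 - p ^ (Suc n - k)) * A ^ k / qpoch p p (Suc n - k)
        = euler_coeff p k * (A * p) ^ k / qpoch p p (n - k)" if "k \<le> n" for k
  proof -
    have "qpoch p p (Suc n - k) = qpoch p p (n - k) * (1 - p ^ Suc (n - k))"
      using that by (simp add: Suc_diff_le qpoch_Suc)
    then show ?thesis
      using that one_minus_power_Suc_nonzero[OF p, of "n - k"]
      by (simp add: Suc_diff_le power_mult_distrib mult_ac)
  qed
  then show ?thesis
    unfolding euler_convolution_def by (simp add: sum.atMost_Suc)
qed

lemma euler_convolution_Suc:
  assumes p: "norm p < 1"
  shows "(1 - p ^ Suc n) * euler_convolution p (Suc n) A = (1 - A) * euler_convolution p n (A * p)"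
proof -
  let ?Q = "qpoch p p"
  have split: "(1 - p ^ Suc n) * (euler_coeff p k * A ^ k / ?Q (Suc n - k))
      = euler_coeff p k * (1 - p ^ k) * A ^ k / ?Q (Suc n - k)
        + euler_coeff p k * p ^ k * (1 - p ^ (Suc n - k)) * A ^ k / ?Q (Suc n - k)"
    if "k \<le> Suc n" for k
  proof -
    have "p ^ k * p ^ (Suc n - k) = p ^ Suc n"
      using that by (simp flip: power_add)
    then have "1 - p ^ Suc n = (1 - p ^ k) + p ^ k * (1 - p ^ (Suc n - k))"
      by (simp add: algebra_simps)
    then show ?thesis
      unfolding add_divide_distrib[symmetric] times_divide_eq_right by (simp add: algebra_simps)
  qed
  have "(1 - p ^ Suc n) * euler_convolution p (Suc n) A
      = (\<Sum>k\<le>Suc n. euler_coeff p k * (1 - p ^ k) * A ^ k / ?Q (Suc n - k)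
          + euler_coeff p k * p ^ k * (1 - p ^ (Suc n - k)) * A ^ k / ?Q (Suc n - k))"
    unfolding euler_convolution_def sum_distrib_left by (intro sum.cong refl split) simp
  also have "\<dots> = - A * euler_convolution p n (A * p) + euler_convolution p n (A * p)"
    by (simp only: sum.distrib euler_convolution_index_shift[OF p] euler_convolution_qpoch_absorb[OF p])
  finally show ?thesis
    by (simp add: algebra_simps)
qed

lemma qpoch_div_qpoch_eq_euler_convolution:
  assumes p: "norm p < 1"
  shows "qpoch A p n / qpoch p p n = euler_convolution p n A"
proof (induction n arbitrary: A)
  case 0
  then show ?case by (simp add: qpoch_def euler_convolution_def)
next
  case (Suc n)
  have "qpoch A p (Suc n) / qpoch p p (Suc n)
      = (1 - A) * (qpoch (A * p) p n / qpoch p p n) / (1 - p ^ Suc n)"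
    by (simp only: qpoch_Suc_shift[of A] qpoch_Suc[of p]) (simp add: divide_divide_eq_left)
  also have "\<dots> = euler_convolution p (Suc n) A"
    using euler_convolution_Suc[OF p, of n A] one_minus_power_Suc_nonzero[OF p, of n]
    by (simp add: Suc.IH field_simps)
  finally show ?case .
qed

lemma qpower_square_div_qpoch_eq_euler_coeff:
  fixes q :: complex
  shows "q ^ (j^2) / qpoch (q^2) (q^2) j = euler_coeff (q^2) j * (-q) ^ j"
proof (induction j)
  case 0
  then show ?case by (simp add: qpoch_def)
next
  case (Suc j)
  define w where "w = (q^2) ^ j"
  have "Suc j ^ 2 = j^2 + 1 + 2 * j"
    by (simp add: power2_eq_square)
  then have "q ^ (Suc j ^ 2) = q ^ (j^2) * (q * w)"
    by (simp only: w_def power_add power_mult power_one_right) (simp add: mult_ac)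
  then have "q ^ (Suc j ^ 2) / qpoch (q^2) (q^2) (Suc j)
      = q ^ (j^2) / qpoch (q^2) (q^2) j * (q * w / (1 - q^2 * w))"
    by (simp add: qpoch_Suc flip: w_def)
  also have "\<dots> = euler_coeff (q^2) j * (-q) ^ j * (q * w / (1 - q^2 * w))"
    by (simp only: Suc.IH)
  also have "\<dots> = euler_coeff (q^2) (Suc j) * (-q) ^ Suc j"
    by (simp add: w_def)
  finally show ?case .
qed

lemma euler_coeff_neg_even:
  fixes q :: complex
  shows "euler_coeff (-q) (2 * k) = euler_coeff (q^2) k * q ^ (k^2) / qpoch (-q) (q^2) k"
proof (induction k)
  case 0
  then show ?case by (simp add: qpoch_def)
next
  case (Suc k)
  define w where "w = (q^2) ^ k"
  have "(-q) ^ (2 * k) = w" "(-q) ^ Suc (2 * k) = - q * w"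
    "(-q) ^ Suc (Suc (2 * k)) = q^2 * w" "2 * Suc k = Suc (Suc (2 * k))"
    by (simp_all add: w_def power_mult power2_eq_square)
  then have "euler_coeff (-q) (2 * Suc k)
      = euler_coeff (-q) (2 * k) * (- w / (1 + q * w)) * (q * w / (1 - q^2 * w))"
    by (simp add: mult_ac)
  also have "\<dots> = euler_coeff (q^2) k * q ^ (k^2) / qpoch (-q) (q^2) k
      * (- w / (1 + q * w)) * (q * w / (1 - q^2 * w))"
    by (simp only: Suc.IH)
  also have "\<dots> = euler_coeff (q^2) (Suc k) * q ^ (Suc k ^ 2) / qpoch (-q) (q^2) (Suc k)"
  proof -
    have "Suc k ^ 2 = k^2 + 1 + 2 * k"
      by (simp add: power2_eq_square)
    then have "q ^ (Suc k ^ 2) = q ^ (k^2) * (q * w)"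
      by (simp only: w_def power_add power_mult power_one_right) (simp add: mult_ac)
    then show ?thesis
      by (simp add: qpoch_Suc mult_ac flip: w_def)
  qed
  finally show ?case .
qed

definition F_double_term :: "complex \<Rightarrow> complex \<Rightarrow> nat \<times> nat \<Rightarrow> complex" where
  "F_double_term A q = (\<lambda>(k, j). euler_coeff (q^2) k * A ^ k * q ^ (k^2 + 2 * k * j)
                                   * (euler_coeff (q^2) j * (-q) ^ j))"

lemma summable_F_double_term:
  assumes q: "norm q < 1"
  shows "F_double_term A q summable_on UNIV"
proof -
  have p: "norm (q^2) < 1"
    using q by (rule norm_square_less_one)
  have "F_double_term A q summable_on UNIV \<times> UNIV"
  proof (rule summable_on_bounded_by_product)
    show "(\<lambda>k. norm (euler_coeff (q^2) k * A ^ k)) summable_on UNIV"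
      "(\<lambda>j. norm (euler_coeff (q^2) j * (-q) ^ j)) summable_on UNIV"
      using p by (simp_all add: summable_on_norm_euler_coeff_power)
    fix k j :: nat
    have "norm (q ^ (k^2 + 2 * k * j)) \<le> 1"
      using q by (simp add: norm_power power_le_one)
    then have "norm (euler_coeff (q^2) k * A ^ k) * norm (q ^ (k^2 + 2 * k * j))
        \<le> norm (euler_coeff (q^2) k * A ^ k)"
      by (simp add: mult_left_le)
    then show "norm (F_double_term A q (k, j))
        \<le> norm (euler_coeff (q^2) k * A ^ k) * norm (euler_coeff (q^2) j * (-q) ^ j)"
      unfolding F_double_term_def case_prod_conv norm_mult[of _ "euler_coeff (q^2) j * _"]
      by (intro mult_right_mono) (simp_all add: norm_mult)
  qed
  then show ?thesis
    by simp
qed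

lemma F_summand_eq_antidiagonal_sum:
  fixes A q :: complex
  assumes q: "norm q < 1"
  shows "q ^ (n^2) * qpoch A (q^2) n / qpoch (q^2) (q^2) n = (\<Sum>k\<le>n. F_double_term A q (k, n - k))"
proof -
  have "q ^ (n^2) * qpoch A (q^2) n / qpoch (q^2) (q^2) n
      = q ^ (n^2) * (qpoch A (q^2) n / qpoch (q^2) (q^2) n)"
    by simp
  also have "\<dots> = (\<Sum>k\<le>n. q ^ (n^2) * (euler_coeff (q^2) k * A ^ k / qpoch (q^2) (q^2) (n - k)))"
    by (simp only: qpoch_div_qpoch_eq_euler_convolution[OF norm_square_less_one[OF q]]
        euler_convolution_def sum_distrib_left)
  also have "\<dots> = (\<Sum>k\<le>n. F_double_term A q (k, n - k))"
  proof (rule sum.cong)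
    fix k assume "k \<in> {..n}"
    then obtain j where n: "n = k + j"
      by (auto dest: le_Suc_ex)
    have "n^2 = (k^2 + 2 * k * j) + j^2"
      unfolding n by (simp add: power2_eq_square algebra_simps)
    then have "q ^ (n^2) = q ^ (k^2 + 2 * k * j) * q ^ (j^2)"
      by (simp add: power_add)
    then have "q ^ (n^2) * (euler_coeff (q^2) k * A ^ k / qpoch (q^2) (q^2) (n - k))
        = euler_coeff (q^2) k * A ^ k * q ^ (k^2 + 2 * k * j) * (q ^ (j^2) / qpoch (q^2) (q^2) j)"
      by (simp add: n)
    also have "\<dots> = F_double_term A q (k, n - k)"
      by (simp add: qpower_square_div_qpoch_eq_euler_coeff F_double_term_def n)
    finally show "q ^ (n^2) * (euler_coeff (q^2) k * A ^ k / qpoch (q^2) (q^2) (n - k))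
        = F_double_term A q (k, n - k)" .
  qed simp
  finally show ?thesis .
qed

lemma F_double_term_row_has_sum:
  fixes A q :: complex
  assumes q: "norm q < 1"
  shows "((\<lambda>j. F_double_term A q (k, j))
           has_sum qpoch_inf (-q) (q^2) * (euler_coeff (-q) (2 * k) * A ^ k)) UNIV"
proof -
  define p where "p = q^2"
  define x where "x = p ^ k * (-q)"
  define c where "c = euler_coeff p k * A ^ k * q ^ (k^2)"
  have p: "norm p < 1"
    unfolding p_def using q by (rule norm_square_less_one)
  have row: "F_double_term A q (k, j) = c * (euler_coeff p j * x ^ j)" for j
  proof -
    have "q ^ (k^2 + 2 * k * j) = q ^ (k^2) * (p ^ k) ^ j"
      by (simp add: p_def power_add power_mult)
    moreover have "x ^ j = (p ^ k) ^ j * (-q) ^ j"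
      unfolding x_def by (rule power_mult_distrib)
    ultimately show ?thesis
      by (simp add: F_double_term_def c_def mult_ac flip: p_def)
  qed
  have "((\<lambda>j. c * (euler_coeff p j * x ^ j)) has_sum c * qpoch_inf x p) UNIV"
    using p by (intro has_sum_cmult_right norm_summable_imp_has_sum
        summable_norm_euler_coeff_power euler_coeff_sums)
  also have "c * qpoch_inf x p = qpoch_inf (-q) p * (euler_coeff (-q) (2 * k) * A ^ k)"
  proof -
    have "qpoch (-q) p k \<noteq> 0"
      using q p by (intro qpoch_nonzero) auto
    then have "euler_coeff (-q) (2 * k) * qpoch (-q) p k = euler_coeff p k * q ^ (k^2)"
      unfolding euler_coeff_neg_even p_def by simp
    then have "c = euler_coeff (-q) (2 * k) * qpoch (-q) p k * A ^ k"
      by (simp add: c_def mult_ac)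
    then show ?thesis
      using qpoch_inf_eq_qpoch_mult[OF p, of "-q" k] by (simp add: x_def mult_ac)
  qed
  finally show ?thesis
    unfolding row p_def .
qed

theorem lemma3p2:
  fixes A q s :: complex
  assumes "norm q < 1"
    and "s ^ 2 = A"
  shows "F A q = (1/2) * qpoch_inf (- q) (q^2)
           * (qpoch_inf (- s) (- q) + qpoch_inf s (- q))"
proof -
  let ?h = "F_double_term A q" and ?P = "qpoch_inf (-q) (q^2)"
  have h: "?h summable_on UNIV"
    using assms(1) by (rule summable_F_double_term)
  have "(\<lambda>n. q ^ (n^2) * qpoch A (q^2) n / qpoch (q^2) (q^2) n) sums infsum ?h UNIV"
    using sums_antidiagonals[OF h] by (simp add: F_summand_eq_antidiagonal_sum[OF assms(1)])
  then have "F A q = infsum ?h UNIV"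
    unfolding F_def by (rule sums_unique[symmetric])
  moreover have "(\<lambda>k. ?P * (euler_coeff (-q) (2 * k) * A ^ k)) sums infsum ?h UNIV"
    using has_sum_SigmaD[where f = ?h and A = UNIV and B = "\<lambda>_. UNIV"] h
      F_double_term_row_has_sum[OF assms(1)]
    by (auto intro!: has_sum_imp_sums has_sum_infsum)
  moreover have "(\<lambda>k. ?P * (euler_coeff (-q) (2 * k) * A ^ k))
      sums (?P * ((qpoch_inf s (-q) + qpoch_inf (-s) (-q)) / 2))"
    using sums_even_part[OF euler_coeff_sums euler_coeff_sums] assms
    by (intro sums_mult) auto
  ultimately have "F A q = ?P * ((qpoch_inf s (-q) + qpoch_inf (-s) (-q)) / 2)"
    using sums_unique2 by metis
  then show ?thesis
    by (simp add: algebra_simps)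
qed

end
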